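(* There exists a function $q\in L_{1,loc}(\mathbb{R}_+)$, $\mathbb{R}_+=[0,+\infty)$, taking purely imaginary values $q(x)\in i\mathbb{R}$ for $x\in\mathbb{R}_+$, with $|q(x)|\to+\infty$ as $x\to+\infty$, such that the following operator $L_0$ has no extension with compact resolvent: $L_0$ is the operator in $L_2(\mathbb{R}_+)$ acting by $L_0y=-y''+qy$ on the domain $$\mathscr{D}_0=\{y\in L_2(\mathbb{R}_+):\ y,y'\in AC_{loc}(\mathbb{R}_+),\ -y''+qy\in L_2(\mathbb{R}_+),\ y(0)=y'(0)=0,\ \exists x_0>0\ \forall x\ge x_0\ y(x)=0\}.$$
   Context: $AC_{loc}(\mathbb{R}_+)$ denotes functions absolutely continuous on every compact subinterval of $[0,+\infty)$. An extension of $L_0$ is an operator $L\supset L_0$ in $L_2(\mathbb{R}_+)$; it has compact resolvent if its resolvent set is nonempty and its resolvent is a compact operator. *)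

theory Defs
  imports "HOL-Analysis.Analysis"
begin

abbreviation Mplus :: "real measure" where
  "Mplus \<equiv> restrict_space lborel {0..}"

definition abs_cont_on :: "(real \<Rightarrow> complex) \<Rightarrow> real \<Rightarrow> real \<Rightarrow> bool" where
  "abs_cont_on f a b \<longleftrightarrow>
     (\<forall>e>0. \<exists>d>0. \<forall>(n::nat) (u::nat \<Rightarrow> real) (v::nat \<Rightarrow> real).
        (\<forall>i<n. a \<le> u i \<and> u i \<le> v i \<and> v i \<le> b) \<longrightarrow>
        (\<forall>i<n. \<forall>j<n. i \<noteq> j \<longrightarrow> v i \<le> u j \<or> v j \<le> u i) \<longrightarrow>
        (\<Sum>i<n. v i - u i) < d \<longrightarrow>
        (\<Sum>i<n. cmod (f (v i) - f (u i))) < e)"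

definition AC_loc :: "(real \<Rightarrow> complex) \<Rightarrow> bool" where
  "AC_loc f \<longleftrightarrow> (\<forall>a b. 0 \<le> a \<longrightarrow> a \<le> b \<longrightarrow> abs_cont_on f a b)"

definition L1_loc :: "(real \<Rightarrow> complex) \<Rightarrow> bool" where
  "L1_loc q \<longleftrightarrow> (\<forall>b\<ge>0. set_integrable lborel {0..b} q)"

definition L2 :: "(real \<Rightarrow> complex) \<Rightarrow> bool" where
  "L2 y \<longleftrightarrow> y \<in> borel_measurable Mplus \<and> integrable Mplus (\<lambda>x. (cmod (y x))\<^sup>2)"

definition L2_norm :: "(real \<Rightarrow> complex) \<Rightarrow> real" where
  "L2_norm y = sqrt (\<integral>x. (cmod (y x))\<^sup>2 \<partial>Mplus)"

definition ae_eq :: "(real \<Rightarrow> complex) \<Rightarrow> (real \<Rightarrow> complex) \<Rightarrow> bool" where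
  "ae_eq y z \<longleftrightarrow> (AE x in Mplus. y x = z x)"

text \<open>A (linear) operator in L_2(R_+) is represented by its graph, a set of pairs
  (y, L y) of representatives, saturated w.r.t. a.e.-equality.\<close>
type_synonym graph = "((real \<Rightarrow> complex) \<times> (real \<Rightarrow> complex)) set"

definition is_operator :: "graph \<Rightarrow> bool" where
  "is_operator L \<longleftrightarrow>
     (\<forall>(y, f)\<in>L. L2 y \<and> L2 f) \<and>
     ((\<lambda>_. 0), (\<lambda>_. 0)) \<in> L \<and>
     (\<forall>(y1, f1)\<in>L. \<forall>(y2, f2)\<in>L. \<forall>c::complex.
        ((\<lambda>x. y1 x + c * y2 x), (\<lambda>x. f1 x + c * f2 x)) \<in> L) \<and>
     (\<forall>(y, f)\<in>L. \<forall>y' f'. L2 y' \<and> L2 f' \<and> ae_eq y y' \<and> ae_eq f f' \<longrightarrow> (y', f') \<in> L) \<and>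
     (\<forall>(y, f)\<in>L. ae_eq y (\<lambda>_. 0) \<longrightarrow> ae_eq f (\<lambda>_. 0))"

text \<open>Compact resolvent: some lambda lies in the resolvent set, i.e. L - lambda is a
  bijection of its domain onto L_2 (modulo a.e.) whose inverse is bounded, and this
  inverse is a compact operator (maps bounded sequences to sequences having an
  L_2-convergent subsequence; compactness implies boundedness).\<close>
definition has_compact_resolvent :: "graph \<Rightarrow> bool" where
  "has_compact_resolvent L \<longleftrightarrow> (\<exists>lam::complex.
     (\<forall>g. L2 g \<longrightarrow> (\<exists>(y, f)\<in>L. ae_eq (\<lambda>x. f x - lam * y x) g)) \<and>
     (\<forall>(y, f)\<in>L. ae_eq (\<lambda>x. f x - lam * y x) (\<lambda>_. 0) \<longrightarrow> ae_eq y (\<lambda>_. 0)) \<and>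
     (\<forall>(s :: nat \<Rightarrow> (real \<Rightarrow> complex) \<times> (real \<Rightarrow> complex)) C.
        (\<forall>n. s n \<in> L \<and> L2_norm (\<lambda>x. snd (s n) x - lam * fst (s n) x) \<le> C) \<longrightarrow>
        (\<exists>r h. strict_mono r \<and> L2 h \<and>
           (\<lambda>n. L2_norm (\<lambda>x. fst (s (r n)) x - h x)) \<longlonglongrightarrow> 0)))"

text \<open>The domain D_0 and the graph of the minimal operator L_0 y = -y'' + q y.
  y1 plays the role of y' and y2 of y'' (defined a.e.).\<close>
definition L0 :: "(real \<Rightarrow> complex) \<Rightarrow> graph" where
  "L0 q = {(y, f). L2 y \<and> L2 f \<and>
     (\<exists>y1 y2. AC_loc y \<and> AC_loc y1 \<and>
        (AE x in Mplus. (y has_vector_derivative y1 x) (at x)) \<and>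
        (AE x in Mplus. (y1 has_vector_derivative y2 x) (at x)) \<and>
        y 0 = 0 \<and> y1 0 = 0 \<and>
        (\<exists>x0>0. \<forall>x\<ge>x0. y x = 0) \<and>
        ae_eq f (\<lambda>x. - y2 x + q x * y x))}"

end

theory Submission
  imports Defs
begin

(* On [n, n+1] the imaginary part V of the potential q = i V is n times a square wave whose
   primitive P_n is a triangle wave bounded by 1; let Phi_n be a primitive of P_n. The functions
   y_n = sin(pi x)^2 exp(i Phi_n), supported in [n, n+1], lie in the domain of L_0, and since
   Phi_n'' = V the potential cancels: with w = sin(pi x)^2,
     -y_n'' + q y_n = (- w'' - 2 i w' P_n + w P_n^2) exp(i Phi_n),
   which is bounded independently of n. So (L - lambda) y_n stays bounded for every extension L
   and every lambda, while the y_n are uniformly separated in L_2; hence the resolvent of L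
   cannot be compact. *)

lemma has_vector_derivative_times_cis:
  fixes a :: "real \<Rightarrow> complex"
  assumes "(a has_vector_derivative a') (at x)" and "(\<Phi> has_real_derivative P) (at x)"
  shows "((\<lambda>x. a x * cis (\<Phi> x)) has_vector_derivative (a' + \<i> * of_real P * a x) * cis (\<Phi> x)) (at x)"
proof -
  have "(cis \<circ> \<Phi> has_vector_derivative \<i> * of_real P * cis (\<Phi> x)) (at x)"
    using has_derivative_cis[OF assms(2)[unfolded has_field_derivative_def]]
    by (simp add: has_vector_derivative_def comp_def algebra_simps scaleR_conv_of_real)
  from has_vector_derivative_mult[OF assms(1) this] show ?thesis
    by (simp add: comp_def algebra_simps)
qed

lemma arcsin_sin_has_real_derivative:
  assumes "cos (c * x) \<noteq> 0"
  shows "((\<lambda>x. arcsin (sin (c * x))) has_real_derivative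
           c * (if cos (c * x) \<ge> 0 then 1 else -1)) (at x)"
proof -
  let ?s = "sin (c * x)" and ?c = "cos (c * x)"
  have "0 < ?c\<^sup>2" using assms by simp
  hence "?s\<^sup>2 < 1" using sin_cos_squared_add[of "c * x"] by linarith
  hence s: "-1 < ?s" "?s < 1" by (auto simp: abs_square_less_1 abs_less_iff)
  have sqrt_eq: "sqrt (1 - ?s\<^sup>2) = \<bar>?c\<bar>"
    by (metis sin_cos_squared_add add_diff_cancel_left' real_sqrt_abs)
  have "((\<lambda>x. arcsin (sin (c * x))) has_real_derivative inverse (sqrt (1 - ?s\<^sup>2)) * (?c * c)) (at x)"
    by (rule DERIV_chain2[where g="\<lambda>x. sin (c * x)", OF DERIV_arcsin[OF s]])
      (auto intro!: derivative_eq_intros)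
  moreover have "inverse (sqrt (1 - ?s\<^sup>2)) * (?c * c) = c * (if ?c \<ge> 0 then 1 else -1)"
    using assms unfolding sqrt_eq by (auto simp: field_simps)
  ultimately show ?thesis by simp
qed

lemma finite_cos_zeros:
  fixes a b c :: real
  assumes "c \<noteq> 0"
  shows "finite {x \<in> {a..b}. cos (c * x) = 0}"
proof -
  define K where "K = {k :: int. \<bar>of_int k\<bar> \<le> \<bar>c\<bar> * (\<bar>a\<bar> + \<bar>b\<bar>) / pi + 1}"
  have "finite K"
    unfolding K_def by (rule finite_subset[of _ "{-\<lceil>\<bar>c\<bar> * (\<bar>a\<bar> + \<bar>b\<bar>) / pi + 1\<rceil>..\<lceil>\<bar>c\<bar> * (\<bar>a\<bar> + \<bar>b\<bar>) / pi + 1\<rceil>}"])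
      (auto simp: abs_le_iff, linarith+)
  moreover have "{x \<in> {a..b}. cos (c * x) = 0} \<subseteq> (\<lambda>k. (of_int k + 1/2) * pi / c) ` K"
  proof
    fix x assume x: "x \<in> {x \<in> {a..b}. cos (c * x) = 0}"
    then obtain k :: int where k: "c * x = of_int k * pi + pi / 2"
      using cos_zero_iff_int2 by auto
    hence "x = (of_int k + 1/2) * pi / c"
      using assms by (simp add: field_simps)
    moreover have "\<bar>of_int k\<bar> \<le> \<bar>c\<bar> * (\<bar>a\<bar> + \<bar>b\<bar>) / pi + 1"
    proof -
      have "\<bar>x\<bar> \<le> \<bar>a\<bar> + \<bar>b\<bar>" using x by auto
      hence "\<bar>c * x\<bar> \<le> \<bar>c\<bar> * (\<bar>a\<bar> + \<bar>b\<bar>)" by (simp add: abs_mult mult_left_mono)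
      hence "\<bar>c * x / pi\<bar> \<le> \<bar>c\<bar> * (\<bar>a\<bar> + \<bar>b\<bar>) / pi" by (simp add: abs_divide divide_right_mono)
      moreover have "of_int k = c * x / pi - 1/2" using k by (simp add: field_simps)
      ultimately show ?thesis by linarith
    qed
    ultimately show "x \<in> (\<lambda>k. (of_int k + 1/2) * pi / c) ` K" unfolding K_def by blast
  qed
  ultimately show ?thesis by (rule finite_surj)
qed

lemma continuous_on_extend_by_zero:
  fixes g :: "real \<Rightarrow> 'a::real_normed_vector"
  assumes "continuous_on {a..b} g" "g a = 0" "g b = 0"
  shows "continuous_on UNIV (\<lambda>x. if x \<in> {a..b} then g x else 0)"
proof -
  have "continuous_on ({a..b} \<union> ({..a} \<union> {b..})) (\<lambda>x. if x \<in> {a..b} then g x else 0)"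
    by (rule continuous_on_cases) (use assms in \<open>auto intro: continuous_on_const\<close>)
  moreover have "{a..b} \<union> ({..a} \<union> {b..}) = UNIV" by auto
  ultimately show ?thesis by simp
qed

lemma has_vector_derivative_extend_by_zero:
  fixes g :: "real \<Rightarrow> 'a::real_normed_vector"
  assumes "x \<noteq> a" "x \<noteq> b"
    and "x \<in> {a<..<b} \<Longrightarrow> (g has_vector_derivative g' x) (at x)"
  shows "((\<lambda>x. if x \<in> {a..b} then g x else 0) has_vector_derivative
           (if x \<in> {a..b} then g' x else 0)) (at x)"
proof (cases "x \<in> {a..b}")
  case True
  hence x: "x \<in> {a<..<b}" using assms by auto
  show ?thesis
    by (rule has_vector_derivative_transform_within_open[OF _ open_greaterThanLessThan x])
      (use assms(3)[OF x] x in auto)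
next
  case False
  hence x: "x \<in> {..<a} \<union> {b<..}" by auto
  show ?thesis
    by (rule has_vector_derivative_transform_within_open[where f="\<lambda>_. 0", OF _ _ x])
      (use False in auto)
qed

lemma norm_diff_le_bounded_derivative:
  fixes f :: "real \<Rightarrow> 'a::banach"
  assumes "finite S" "continuous_on UNIV f"
    and "\<And>x. x \<notin> S \<Longrightarrow> (f has_vector_derivative f' x) (at x)"
    and "\<And>x. norm (f' x) \<le> B" and "u \<le> v"
  shows "norm (f v - f u) \<le> B * (v - u)"
proof -
  have B: "0 \<le> B" using assms(4)[of 0] norm_ge_zero order_trans by blast
  have "(f' has_integral (f v - f u)) (cbox u v)"
    using fundamental_theorem_of_calculus_interior_strong[OF assms(1,5)]
      continuous_on_subset[OF assms(2)] assms(3) by auto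
  from has_integral_bound[OF B this] assms(4,5) show ?thesis by simp
qed

lemma AC_loc_bounded_derivative:
  assumes "finite S" "continuous_on UNIV f"
    and "\<And>x. x \<notin> S \<Longrightarrow> (f has_vector_derivative f' x) (at x)"
    and "\<And>x. norm (f' x) \<le> B"
  shows "AC_loc f"
  unfolding AC_loc_def abs_cont_on_def
proof (intro allI impI)
  fix a b e :: real assume "0 < e"
  have B: "0 \<le> B" using assms(4)[of 0] norm_ge_zero order_trans by blast
  show "\<exists>d>0. \<forall>(n::nat) (u::nat \<Rightarrow> real) (v::nat \<Rightarrow> real).
        (\<forall>i<n. a \<le> u i \<and> u i \<le> v i \<and> v i \<le> b) \<longrightarrow>
        (\<forall>i<n. \<forall>j<n. i \<noteq> j \<longrightarrow> v i \<le> u j \<or> v j \<le> u i) \<longrightarrow>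
        (\<Sum>i<n. v i - u i) < d \<longrightarrow>
        (\<Sum>i<n. cmod (f (v i) - f (u i))) < e"
  proof (intro exI[of _ "e / (B + 1)"] conjI allI impI)
    show "0 < e / (B + 1)" using B \<open>0 < e\<close> by simp
    fix n :: nat and u v :: "nat \<Rightarrow> real"
    assume uv: "\<forall>i<n. a \<le> u i \<and> u i \<le> v i \<and> v i \<le> b"
      and small: "(\<Sum>i<n. v i - u i) < e / (B + 1)"
    have "(\<Sum>i<n. cmod (f (v i) - f (u i))) \<le> (\<Sum>i<n. B * (v i - u i))"
      using uv by (intro sum_mono norm_diff_le_bounded_derivative[OF assms]) auto
    also have "\<dots> = B * (\<Sum>i<n. v i - u i)" by (simp add: sum_distrib_left)
    also have "\<dots> \<le> B * (e / (B + 1))" using small B by (intro mult_left_mono) auto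
    also have "\<dots> < e" using B \<open>0 < e\<close> by (simp add: field_simps)
    finally show "(\<Sum>i<n. cmod (f (v i) - f (u i))) < e" .
  qed
qed

lemma AE_Mplus_finite_exceptions:
  assumes "finite N" "\<And>x. x \<notin> N \<Longrightarrow> P x"
  shows "AE x in Mplus. P x"
proof -
  have "AE x in lborel. x \<notin> N" by (rule AE_not_in[OF finite_imp_null_set_lborel[OF assms(1)]])
  hence "AE x in lborel. x \<in> {0..} \<longrightarrow> P x" by eventually_elim (use assms(2) in auto)
  thus ?thesis by (subst AE_restrict_space_iff) auto
qed

lemma integral_indicator_Mplus:
  assumes "0 \<le> a" "a \<le> b"
  shows "integrable Mplus (indicator {a..b} :: real \<Rightarrow> real)"
    and "integral\<^sup>L Mplus (indicator {a..b} :: real \<Rightarrow> real) = b - a"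
proof -
  have sets: "{a..b} \<in> sets Mplus" and space: "{a..b} \<inter> space Mplus = {a..b}"
    using assms by (auto simp: sets_restrict_space_iff space_restrict_space)
  have "emeasure Mplus {a..b} = emeasure lborel {a..b}"
    by (rule emeasure_restrict_space) (use assms in auto)
  thus "integrable Mplus (indicator {a..b} :: real \<Rightarrow> real)"
    using sets space assms by (simp add: integrable_indicator_iff)
  have "measure Mplus {a..b} = measure lborel {a..b}"
    by (rule measure_restrict_space) (use assms in auto)
  thus "integral\<^sup>L Mplus (indicator {a..b} :: real \<Rightarrow> real) = b - a"
    using sets space assms by simp
qed

lemma L2_bounded_support:
  fixes g :: "real \<Rightarrow> complex"
  assumes "g \<in> borel_measurable borel" and "\<And>x. norm (g x) \<le> K * indicator {a..b} x"
    and "0 \<le> a" "a \<le> b"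
  shows "L2 g" and "L2_norm g \<le> \<bar>K\<bar> * sqrt (b - a)"
proof -
  have mg: "g \<in> borel_measurable Mplus"
    by (rule measurable_restrict_space1) (use assms(1) in simp)
  have pt: "(cmod (g x))\<^sup>2 \<le> K\<^sup>2 * indicator {a..b} x" for x
    using assms(2)[of x] by (cases "x \<in> {a..b}") (auto simp: power_mono)
  have int_bound: "integrable Mplus (\<lambda>x. K\<^sup>2 * indicator {a..b} x :: real)"
    by (intro integrable_mult_right integral_indicator_Mplus assms)
  have int: "integrable Mplus (\<lambda>x. (cmod (g x))\<^sup>2)"
    by (rule Bochner_Integration.integrable_bound[OF int_bound]) (use mg pt in auto)
  thus "L2 g" unfolding L2_def using mg by simp
  have "(\<integral>x. (cmod (g x))\<^sup>2 \<partial>Mplus) \<le> (\<integral>x. K\<^sup>2 * indicator {a..b} x \<partial>Mplus)"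
    by (rule integral_mono[OF int int_bound pt])
  also have "\<dots> = K\<^sup>2 * (b - a)" using integral_indicator_Mplus[OF assms(3,4)] by simp
  finally show "L2_norm g \<le> \<bar>K\<bar> * sqrt (b - a)"
    unfolding L2_norm_def by (metis real_sqrt_abs real_sqrt_le_mono real_sqrt_mult)
qed

lemma sq_norm_diff_le:
  fixes u v w :: complex
  shows "(cmod (u - v))\<^sup>2 \<le> 2 * (cmod (u - w))\<^sup>2 + 2 * (cmod (v - w))\<^sup>2"
proof -
  have "cmod (u - v) \<le> cmod (u - w) + cmod (v - w)"
    using norm_triangle_ineq4[of "u - w" "v - w"] by simp
  hence "(cmod (u - v))\<^sup>2 \<le> (cmod (u - w) + cmod (v - w))\<^sup>2" by (rule power_mono) simp
  also have "\<dots> \<le> 2 * (cmod (u - w))\<^sup>2 + 2 * (cmod (v - w))\<^sup>2"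
    using sum_squares_bound[of "cmod (u - w)" "cmod (v - w)"] by (simp add: power2_sum)
  finally show ?thesis .
qed

lemma L2_integrable_sq_norm_diff:
  assumes "L2 f" "L2 g"
  shows "integrable Mplus (\<lambda>x. (cmod (f x - g x))\<^sup>2)"
proof -
  have [measurable]: "f \<in> borel_measurable Mplus" "g \<in> borel_measurable Mplus"
    using assms unfolding L2_def by auto
  have "integrable Mplus (\<lambda>x. 2 * (cmod (f x))\<^sup>2 + 2 * (cmod (g x))\<^sup>2)"
    using assms unfolding L2_def by auto
  moreover have "(cmod (f x - g x))\<^sup>2 \<le> 2 * (cmod (f x))\<^sup>2 + 2 * (cmod (g x))\<^sup>2" for x
    using sq_norm_diff_le[of "f x" "g x" 0] by simp
  ultimately show ?thesis
    by (elim Bochner_Integration.integrable_bound) (auto intro!: AE_I2)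
qed

lemma L2_dist_sq_le:
  assumes "L2 f" "L2 g" "L2 h"
  shows "(\<integral>x. (cmod (f x - g x))\<^sup>2 \<partial>Mplus)
     \<le> 2 * (\<integral>x. (cmod (f x - h x))\<^sup>2 \<partial>Mplus) + 2 * (\<integral>x. (cmod (g x - h x))\<^sup>2 \<partial>Mplus)"
proof -
  have "(\<integral>x. (cmod (f x - g x))\<^sup>2 \<partial>Mplus)
     \<le> (\<integral>x. 2 * (cmod (f x - h x))\<^sup>2 + 2 * (cmod (g x - h x))\<^sup>2 \<partial>Mplus)"
    using assms by (intro integral_mono L2_integrable_sq_norm_diff sq_norm_diff_le
        Bochner_Integration.integrable_add integrable_mult_right)
  also have "\<dots> = 2 * (\<integral>x. (cmod (f x - h x))\<^sup>2 \<partial>Mplus) + 2 * (\<integral>x. (cmod (g x - h x))\<^sup>2 \<partial>Mplus)"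
    using assms by (simp add: L2_integrable_sq_norm_diff)
  finally show ?thesis .
qed

lemma not_has_compact_resolvent_if_separated:
  fixes y f :: "nat \<Rightarrow> real \<Rightarrow> complex"
  assumes in_L: "\<And>n. (y n, f n) \<in> L" and L2: "\<And>n. L2 (y n)"
    and bounded: "\<And>lam. \<exists>C. \<forall>n. L2_norm (\<lambda>x. f n x - lam * y n x) \<le> C"
    and separated: "\<And>m n. m \<noteq> n \<Longrightarrow> \<delta> \<le> (\<integral>x. (cmod (y m x - y n x))\<^sup>2 \<partial>Mplus)"
    and "0 < \<delta>"
  shows "\<not> has_compact_resolvent L"
proof
  assume "has_compact_resolvent L"
  then obtain lam where compact: "\<forall>(s :: nat \<Rightarrow> (real \<Rightarrow> complex) \<times> (real \<Rightarrow> complex)) C.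
        (\<forall>n. s n \<in> L \<and> L2_norm (\<lambda>x. snd (s n) x - lam * fst (s n) x) \<le> C) \<longrightarrow>
        (\<exists>r h. strict_mono r \<and> L2 h \<and>
           (\<lambda>n. L2_norm (\<lambda>x. fst (s (r n)) x - h x)) \<longlonglongrightarrow> 0)"
    unfolding has_compact_resolvent_def by blast
  obtain C where "\<forall>n. L2_norm (\<lambda>x. f n x - lam * y n x) \<le> C"
    using bounded by blast
  then obtain r h where r: "strict_mono r" and h: "L2 h"
    and lim: "(\<lambda>n. L2_norm (\<lambda>x. y (r n) x - h x)) \<longlonglongrightarrow> 0"
    using compact[rule_format, of "\<lambda>n. (y n, f n)"] in_L by fastforce
  define D where "D n = (\<integral>x. (cmod (y (r n) x - h x))\<^sup>2 \<partial>Mplus)" for n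
  obtain N where N: "\<And>n. n \<ge> N \<Longrightarrow> sqrt (D n) < sqrt (\<delta> / 4)"
    using order_tendstoD(2)[OF lim, of "sqrt (\<delta> / 4)"] \<open>0 < \<delta>\<close>
    unfolding eventually_sequentially L2_norm_def D_def by auto
  have "\<delta> \<le> (\<integral>x. (cmod (y (r N) x - y (r (Suc N)) x))\<^sup>2 \<partial>Mplus)"
    using separated r by (simp add: strict_mono_eq)
  also have "\<dots> \<le> 2 * D N + 2 * D (Suc N)"
    unfolding D_def by (rule L2_dist_sq_le[OF L2 L2 h])
  also have "\<dots> < \<delta>"
    using N[of N] N[of "Suc N"] by simp
  finally show False by simp
qed

(* V, P_n and Phi_n of the proof idea. The sign is +1 at the zeros of the cosine, so that
   |q x| = floor x everywhere. *)
definition im_potential :: "real \<Rightarrow> real" where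
  "im_potential x = of_int \<lfloor>x\<rfloor> * (if cos (pi * (of_int \<lfloor>x\<rfloor>)\<^sup>2 * x) \<ge> 0 then 1 else -1)"

definition potential :: "real \<Rightarrow> complex" where
  "potential x = \<i> * of_real (im_potential x)"

definition phase_rate :: "nat \<Rightarrow> real \<Rightarrow> real" where
  "phase_rate n x = arcsin (sin (pi * (real n)\<^sup>2 * x)) / (pi * real n)"

definition phase :: "nat \<Rightarrow> real \<Rightarrow> real" where
  "phase n x = integral {real n..x} (phase_rate n)"

lemma abs_im_potential: "\<bar>im_potential x\<bar> = \<bar>of_int \<lfloor>x\<rfloor>\<bar>"
  unfolding im_potential_def by (simp add: abs_mult)

lemma continuous_on_phase_rate: "continuous_on UNIV (phase_rate n)"
  unfolding phase_rate_def divide_inverse by (intro continuous_intros) auto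

lemma abs_phase_rate_le:
  assumes "n \<ge> 1"
  shows "\<bar>phase_rate n x\<bar> \<le> 1"
proof -
  have "\<bar>arcsin (sin (pi * (real n)\<^sup>2 * x))\<bar> \<le> pi / 2"
    using arcsin_bounded[of "sin (pi * (real n)\<^sup>2 * x)"] by auto
  also have "\<dots> \<le> pi * real n" using assms by simp
  finally show ?thesis
    unfolding phase_rate_def using assms by (simp add: divide_le_eq_1)
qed

lemma phase_rate_has_real_derivative:
  assumes "n \<ge> 1" "x \<in> {real n<..<real n + 1}" "cos (pi * (real n)\<^sup>2 * x) \<noteq> 0"
  shows "(phase_rate n has_real_derivative im_potential x) (at x)"
proof -
  let ?sign = "if cos (pi * (real n)\<^sup>2 * x) \<ge> 0 then 1 else -1 :: real"
  have "\<lfloor>x\<rfloor> = int n" using assms(2) by (simp add: floor_eq_iff)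
  hence "im_potential x = pi * (real n)\<^sup>2 * ?sign / (pi * real n)"
    unfolding im_potential_def using assms(1) by (simp add: power2_eq_square)
  moreover have "(phase_rate n has_real_derivative pi * (real n)\<^sup>2 * ?sign / (pi * real n)) (at x)"
    unfolding phase_rate_def[abs_def]
    by (rule DERIV_cdivide[OF arcsin_sin_has_real_derivative[OF assms(3)]])
  ultimately show ?thesis by simp
qed

lemma phase_has_real_derivative:
  assumes "x \<in> {real n<..<real n + 1}"
  shows "(phase n has_real_derivative phase_rate n x) (at x)"
proof -
  have "(phase n has_real_derivative phase_rate n x) (at x within {real n..real n + 1})"
    unfolding phase_def[abs_def] using assms
    by (intro integral_has_real_derivative continuous_on_subset[OF continuous_on_phase_rate]) auto
  moreover have "x \<in> interior {real n..real n + 1}" using assms by simp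
  ultimately show ?thesis by (simp only: at_within_interior)
qed

lemma continuous_on_phase: "continuous_on {real n..real n + 1} (phase n)"
  unfolding phase_def
  by (intro indefinite_integral_continuous_1 integrable_continuous_real
      continuous_on_subset[OF continuous_on_phase_rate]) auto

lemma sin_pi_sq_has_real_derivative:
  "((\<lambda>x. (sin (pi * x))\<^sup>2) has_real_derivative pi * sin (2 * pi * x)) (at x)"
  by (auto intro!: derivative_eq_intros simp: sin_double[of "pi * x", simplified mult.assoc[symmetric]])

lemma pi_sin_2pi_has_real_derivative:
  "((\<lambda>x. pi * sin (2 * pi * x)) has_real_derivative 2 * pi\<^sup>2 * cos (2 * pi * x)) (at x)"
  by (auto intro!: derivative_eq_intros simp: power2_eq_square)

definition bump_amp :: "nat \<Rightarrow> real \<Rightarrow> complex" where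
  "bump_amp n x = of_real (pi * sin (2 * pi * x)) + \<i> * of_real (phase_rate n x * (sin (pi * x))\<^sup>2)"

definition bump :: "nat \<Rightarrow> real \<Rightarrow> complex" where
  "bump n x = (if x \<in> {real n..real n + 1} then of_real ((sin (pi * x))\<^sup>2) * cis (phase n x) else 0)"

definition bump_deriv :: "nat \<Rightarrow> real \<Rightarrow> complex" where
  "bump_deriv n x = (if x \<in> {real n..real n + 1} then bump_amp n x * cis (phase n x) else 0)"

definition bump_deriv2 :: "nat \<Rightarrow> real \<Rightarrow> complex" where
  "bump_deriv2 n x = (if x \<in> {real n..real n + 1} then
     (of_real (2 * pi\<^sup>2 * cos (2 * pi * x))
      + \<i> * of_real (pi * sin (2 * pi * x) * phase_rate n x + (sin (pi * x))\<^sup>2 * im_potential x)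
      + \<i> * of_real (phase_rate n x) * bump_amp n x) * cis (phase n x)
     else 0)"

lemma bump_amp_has_vector_derivative:
  assumes "n \<ge> 1" "x \<in> {real n<..<real n + 1}" "cos (pi * (real n)\<^sup>2 * x) \<noteq> 0"
  shows "(bump_amp n has_vector_derivative
           of_real (2 * pi\<^sup>2 * cos (2 * pi * x))
           + \<i> * of_real (pi * sin (2 * pi * x) * phase_rate n x + (sin (pi * x))\<^sup>2 * im_potential x)) (at x)"
proof -
  have "((\<lambda>x. phase_rate n x * (sin (pi * x))\<^sup>2) has_real_derivative
          im_potential x * (sin (pi * x))\<^sup>2 + pi * sin (2 * pi * x) * phase_rate n x) (at x)"
    by (rule DERIV_mult[OF phase_rate_has_real_derivative[OF assms] sin_pi_sq_has_real_derivative])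
  from has_vector_derivative_add[OF
      has_vector_derivative_of_real[OF pi_sin_2pi_has_real_derivative]
      has_vector_derivative_mult_right[OF has_vector_derivative_of_real[OF this], of \<i>]]
  show ?thesis
    unfolding bump_amp_def[abs_def] by (simp add: algebra_simps)
qed

lemma bump_has_vector_derivative:
  assumes "x \<noteq> real n" "x \<noteq> real n + 1"
  shows "(bump n has_vector_derivative bump_deriv n x) (at x)"
  unfolding bump_def[abs_def] bump_deriv_def
proof (rule has_vector_derivative_extend_by_zero[OF assms])
  assume "x \<in> {real n<..<real n + 1}"
  from has_vector_derivative_times_cis[OF
      has_vector_derivative_of_real[OF sin_pi_sq_has_real_derivative]
      phase_has_real_derivative[OF this]]
  show "((\<lambda>x. of_real ((sin (pi * x))\<^sup>2) * cis (phase n x)) has_vector_derivative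
          bump_amp n x * cis (phase n x)) (at x)"
    by (simp add: bump_amp_def mult.assoc)
qed

lemma bump_deriv_has_vector_derivative:
  assumes "n \<ge> 1" "x \<noteq> real n" "x \<noteq> real n + 1"
    and "x \<in> {real n..real n + 1} \<Longrightarrow> cos (pi * (real n)\<^sup>2 * x) \<noteq> 0"
  shows "(bump_deriv n has_vector_derivative bump_deriv2 n x) (at x)"
  unfolding bump_deriv_def[abs_def] bump_deriv2_def
proof (rule has_vector_derivative_extend_by_zero[OF assms(2,3)])
  assume x: "x \<in> {real n<..<real n + 1}"
  show "((\<lambda>x. bump_amp n x * cis (phase n x)) has_vector_derivative
     (of_real (2 * pi\<^sup>2 * cos (2 * pi * x))
      + \<i> * of_real (pi * sin (2 * pi * x) * phase_rate n x + (sin (pi * x))\<^sup>2 * im_potential x)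
      + \<i> * of_real (phase_rate n x) * bump_amp n x) * cis (phase n x)) (at x)"
    using x assms(4)
    by (intro has_vector_derivative_times_cis bump_amp_has_vector_derivative
        phase_has_real_derivative assms(1)) auto
qed

(* -y'' + q y for y = bump n, in the form where the potential has cancelled (bump_image_eq). *)
definition bump_image :: "nat \<Rightarrow> real \<Rightarrow> complex" where
  "bump_image n x = (if x \<in> {real n..real n + 1} then
     - (of_real (2 * pi\<^sup>2 * cos (2 * pi * x)) + \<i> * of_real (pi * sin (2 * pi * x) * phase_rate n x)
        + \<i> * of_real (phase_rate n x) * bump_amp n x) * cis (phase n x)
     else 0)"

lemma bump_image_eq: "bump_image n x = - bump_deriv2 n x + potential x * bump n x"
  by (simp add: bump_image_def bump_deriv2_def bump_def potential_def algebra_simps)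

lemma sin_pi_mult_nat_eq_0:
  "sin (pi * real n) = 0" "sin (pi * (real n + 1)) = 0"
  "sin (2 * pi * real n) = 0" "sin (2 * pi * (real n + 1)) = 0"
  using sin_npi2[of n] sin_npi2[of "Suc n"] sin_npi2[of "2 * n"] sin_npi2[of "2 * Suc n"]
  by (simp_all add: algebra_simps)

lemma continuous_on_bump: "continuous_on UNIV (bump n)"
  unfolding bump_def[abs_def]
  by (intro continuous_on_extend_by_zero continuous_intros continuous_on_phase)
    (simp_all add: sin_pi_mult_nat_eq_0)

lemma continuous_on_bump_deriv: "continuous_on UNIV (bump_deriv n)"
  unfolding bump_deriv_def[abs_def] bump_amp_def
  by (intro continuous_on_extend_by_zero continuous_intros continuous_on_phase
      continuous_on_subset[OF continuous_on_phase_rate subset_UNIV])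
    (simp_all add: sin_pi_mult_nat_eq_0)

lemma bump_image_measurable: "bump_image n \<in> borel_measurable borel"
  unfolding bump_image_def[abs_def] bump_amp_def
  by (intro borel_measurable_continuous_on_if continuous_intros continuous_on_phase
      continuous_on_subset[OF continuous_on_phase_rate subset_UNIV]) simp_all

lemma norm_of_real_add_i_mult_le:
  assumes "\<bar>u\<bar> \<le> U" "\<bar>v\<bar> \<le> V" "\<bar>p\<bar> \<le> 1" "cmod A \<le> B"
  shows "cmod (of_real u + \<i> * of_real v + \<i> * of_real p * A) \<le> U + V + B"
proof -
  have "cmod (of_real u + \<i> * of_real v + \<i> * of_real p * A)
      \<le> cmod (of_real u) + cmod (\<i> * of_real v) + cmod (\<i> * of_real p * A)"
    by (rule order_trans[OF norm_triangle_ineq add_right_mono[OF norm_triangle_ineq]])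
  also have "\<dots> = \<bar>u\<bar> + \<bar>v\<bar> + \<bar>p\<bar> * cmod A" by (simp add: norm_mult)
  also have "\<bar>p\<bar> * cmod A \<le> 1 * B" using assms(3,4) by (intro mult_mono) auto
  finally show ?thesis using assms(1,2) by simp
qed

lemma abs_mult_le_of_abs_le_one:
  fixes a b :: real
  assumes "\<bar>a\<bar> \<le> 1"
  shows "\<bar>a * b\<bar> \<le> \<bar>b\<bar>" and "\<bar>b * a\<bar> \<le> \<bar>b\<bar>"
  using mult_right_le_one_le[OF abs_ge_zero abs_ge_zero assms, of b] by (simp_all add: abs_mult mult.commute)

lemma abs_sin_sq_le_one: "\<bar>(sin t)\<^sup>2\<bar> \<le> (1::real)"
  using abs_sin_le_one[of t] by (simp add: abs_square_le_1)

lemma norm_bump_le: "cmod (bump n x) \<le> indicator {real n..real n + 1} x"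
  using abs_sin_sq_le_one[of "pi * x"] by (simp add: bump_def indicator_def norm_mult norm_power)

lemma norm_bump_amp_le:
  assumes "n \<ge> 1"
  shows "cmod (bump_amp n x) \<le> pi + 1"
proof -
  have u: "\<bar>pi * sin (2 * pi * x)\<bar> \<le> pi"
    using abs_mult_le_of_abs_le_one(2)[of "sin (2 * pi * x)" pi] abs_sin_le_one by simp
  have v: "\<bar>phase_rate n x * (sin (pi * x))\<^sup>2\<bar> \<le> 1"
    using abs_mult_le_of_abs_le_one(2)[OF abs_sin_sq_le_one] abs_phase_rate_le[OF assms]
    by (meson order_trans)
  show ?thesis
    using norm_of_real_add_i_mult_le[OF u v, of 0 0 0] by (simp add: bump_amp_def)
qed

lemma norm_bump_deriv_le:
  assumes "n \<ge> 1"
  shows "cmod (bump_deriv n x) \<le> pi + 1"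
  using norm_bump_amp_le[OF assms, of x] pi_gt_zero by (simp add: bump_deriv_def norm_mult)

lemma abs_bump_coefficients_le:
  assumes "n \<ge> 1"
  shows "\<bar>2 * pi\<^sup>2 * cos (2 * pi * x)\<bar> \<le> 2 * pi\<^sup>2"
    and "\<bar>pi * sin (2 * pi * x) * phase_rate n x\<bar> \<le> pi"
proof -
  show "\<bar>2 * pi\<^sup>2 * cos (2 * pi * x)\<bar> \<le> 2 * pi\<^sup>2"
    using abs_mult_le_of_abs_le_one(2)[of "cos (2 * pi * x)" "2 * pi\<^sup>2"] abs_cos_le_one by simp
  have "\<bar>sin (2 * pi * x) * phase_rate n x\<bar> \<le> 1"
    using abs_mult_le_of_abs_le_one(1)[OF abs_sin_le_one] abs_phase_rate_le[OF assms]
    by (meson order_trans)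
  hence "\<bar>pi * (sin (2 * pi * x) * phase_rate n x)\<bar> \<le> pi"
    by (simp add: abs_mult mult_left_le)
  thus "\<bar>pi * sin (2 * pi * x) * phase_rate n x\<bar> \<le> pi" by (simp add: mult.assoc)
qed

lemma norm_bump_deriv2_le:
  assumes "n \<ge> 1"
  shows "cmod (bump_deriv2 n x) \<le> 2 * pi\<^sup>2 + (pi + (real n + 1)) + (pi + 1)"
proof (cases "x \<in> {real n..real n + 1}")
  case True
  have "\<bar>im_potential x\<bar> \<le> real n + 1"
    unfolding abs_im_potential using True by (auto simp: floor_le_iff) linarith
  hence "\<bar>(sin (pi * x))\<^sup>2 * im_potential x\<bar> \<le> real n + 1"
    using abs_mult_le_of_abs_le_one(1)[OF abs_sin_sq_le_one] by (meson order_trans)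
  hence "\<bar>pi * sin (2 * pi * x) * phase_rate n x + (sin (pi * x))\<^sup>2 * im_potential x\<bar> \<le> pi + (real n + 1)"
    using abs_bump_coefficients_le(2)[OF assms, of x] by linarith
  from norm_of_real_add_i_mult_le[OF abs_bump_coefficients_le(1)[OF assms] this
      abs_phase_rate_le[OF assms] norm_bump_amp_le[OF assms]]
  show ?thesis
    by (simp only: bump_deriv2_def if_P[OF True] norm_mult norm_cis mult_1_right)
next
  case False
  thus ?thesis unfolding bump_deriv2_def if_not_P[OF False] by (simp add: add_nonneg_nonneg)
qed

lemma norm_bump_image_le:
  assumes "n \<ge> 1"
  shows "cmod (bump_image n x) \<le> (2 * pi\<^sup>2 + pi + (pi + 1)) * indicator {real n..real n + 1} x"
proof (cases "x \<in> {real n..real n + 1}")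
  case True
  from norm_of_real_add_i_mult_le[OF abs_bump_coefficients_le[OF assms]
      abs_phase_rate_le[OF assms] norm_bump_amp_le[OF assms]]
  show ?thesis
    by (simp only: bump_image_def if_True True indicator_simps norm_mult norm_minus_cancel
        norm_cis mult_1_right)
next
  case False
  thus ?thesis unfolding bump_image_def if_not_P[OF False] by simp
qed

lemma AC_loc_bump:
  assumes "n \<ge> 1"
  shows "AC_loc (bump n)"
  by (rule AC_loc_bounded_derivative[of "{real n, real n + 1}", OF _ continuous_on_bump
        bump_has_vector_derivative norm_bump_deriv_le[OF assms]]) auto

lemma
  assumes "n \<ge> 1"
  defines "S \<equiv> {real n, real n + 1} \<union> {x \<in> {real n..real n + 1}. cos (pi * (real n)\<^sup>2 * x) = 0}"
  shows finite_bump_deriv_singularities: "finite S"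
    and bump_deriv_has_vector_derivative_off:
      "x \<notin> S \<Longrightarrow> (bump_deriv n has_vector_derivative bump_deriv2 n x) (at x)"
  using assms finite_cos_zeros[of "pi * (real n)\<^sup>2"]
  by (auto intro!: bump_deriv_has_vector_derivative)

lemma AC_loc_bump_deriv:
  assumes "n \<ge> 1"
  shows "AC_loc (bump_deriv n)"
  by (rule AC_loc_bounded_derivative[OF finite_bump_deriv_singularities[OF assms]
        continuous_on_bump_deriv bump_deriv_has_vector_derivative_off[OF assms]
        norm_bump_deriv2_le[OF assms]])

lemma L2_bump: "L2 (bump n)"
  using norm_bump_le
  by (intro L2_bounded_support(1)[of _ 1 "real n" "real n + 1"]
      borel_measurable_continuous_onI[OF continuous_on_bump]) auto

lemma bump_in_L0:
  assumes "n \<ge> 1"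
  shows "(bump n, bump_image n) \<in> L0 potential"
proof -
  have "L2 (bump_image n)"
    using L2_bounded_support(1)[OF bump_image_measurable norm_bump_image_le[OF assms]] by simp
  moreover have "AE x in Mplus. (bump n has_vector_derivative bump_deriv n x) (at x)"
    by (rule AE_Mplus_finite_exceptions[of "{real n, real n + 1}"])
      (auto intro: bump_has_vector_derivative)
  moreover have "AE x in Mplus. (bump_deriv n has_vector_derivative bump_deriv2 n x) (at x)"
    by (rule AE_Mplus_finite_exceptions[OF finite_bump_deriv_singularities[OF assms]])
      (rule bump_deriv_has_vector_derivative_off[OF assms])
  moreover have "bump n 0 = 0" "bump_deriv n 0 = 0"
    using assms by (auto simp: bump_def bump_deriv_def)
  moreover have "\<exists>x0>0. \<forall>x \<ge> x0. bump n x = 0"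
    by (intro exI[of _ "real n + 2"]) (simp add: bump_def)
  moreover have "ae_eq (bump_image n) (\<lambda>x. - bump_deriv2 n x + potential x * bump n x)"
    unfolding ae_eq_def bump_image_eq by simp
  ultimately show ?thesis
    unfolding L0_def using L2_bump AC_loc_bump[OF assms] AC_loc_bump_deriv[OF assms] by blast
qed

lemma L2_norm_bump_image_diff_le:
  assumes "n \<ge> 1"
  shows "L2_norm (\<lambda>x. bump_image n x - lam * bump n x) \<le> 2 * pi\<^sup>2 + pi + (pi + 1) + cmod lam"
proof -
  have [measurable]: "bump_image n \<in> borel_measurable borel" "bump n \<in> borel_measurable borel"
    by (rule bump_image_measurable, rule borel_measurable_continuous_onI[OF continuous_on_bump])
  have "cmod (bump_image n x - lam * bump n x)
      \<le> (2 * pi\<^sup>2 + pi + (pi + 1) + cmod lam) * indicator {real n..real n + 1} x" for x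
    using norm_triangle_ineq4[of "bump_image n x" "lam * bump n x"]
      norm_bump_image_le[OF assms, of x] norm_bump_le[of n x]
      mult_left_mono[OF norm_bump_le[of n x], of "cmod lam"]
    by (simp add: norm_mult distrib_right)
  from L2_bounded_support(2)[OF _ this] show ?thesis
    using pi_gt_zero by simp
qed

lemma sin_sq_ge_half:
  assumes "x \<in> {real k + 1/4..real k + 3/4}"
  shows "1/2 \<le> (sin (pi * x))\<^sup>2"
proof -
  define t where "t = x - real k"
  have "cos (2 * pi * x) = cos (2 * pi * t + 2 * real k * pi)"
    unfolding t_def by (simp add: algebra_simps)
  also have "\<dots> = - cos (2 * pi * t - pi)"
    by (simp add: cos_add)
  also have "\<dots> \<le> 0"
  proof -
    have "1/4 \<le> t" "t \<le> 3/4" using assms unfolding t_def by auto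
    hence "pi * (1/4) \<le> pi * t" "pi * t \<le> pi * (3/4)" by (simp_all add: mult_left_mono)
    hence "0 \<le> cos (2 * pi * t - pi)" by (intro cos_ge_zero) linarith+
    thus ?thesis by simp
  qed
  finally show ?thesis
    using cos_double_sin[of "pi * x"] by (simp add: mult.assoc)
qed

lemma bump_separated:
  assumes "a \<noteq> b"
  shows "1/8 \<le> (\<integral>x. (cmod (bump a x - bump b x))\<^sup>2 \<partial>Mplus)"
proof -
  have pt: "1/4 * indicator {real a + 1/4..real a + 3/4} x \<le> (cmod (bump a x - bump b x))\<^sup>2" for x
  proof (cases "x \<in> {real a + 1/4..real a + 3/4}")
    case True
    have xa: "x \<in> {real a..real a + 1}" using True by auto
    have xb: "x \<notin> {real b..real b + 1}"
    proof
      assume "x \<in> {real b..real b + 1}"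
      with True have "real b < real a + 1" "real a < real b + 1" by auto
      with assms show False by linarith
    qed
    hence "cmod (bump a x - bump b x) = (sin (pi * x))\<^sup>2"
      unfolding bump_def if_P[OF xa] if_not_P[OF xb] by (simp add: norm_mult norm_power)
    moreover have "(1/2)\<^sup>2 \<le> ((sin (pi * x))\<^sup>2)\<^sup>2"
      by (rule power_mono[OF sin_sq_ge_half[OF True]]) simp
    ultimately show ?thesis using True by (simp add: power2_eq_square)
  qed simp
  have "(1/4 * (1/2) :: real) = (\<integral>x. 1/4 * indicator {real a + 1/4..real a + 3/4} x \<partial>Mplus)"
    using integral_indicator_Mplus(2)[of "real a + 1/4" "real a + 3/4"] by simp
  also have "\<dots> \<le> (\<integral>x. (cmod (bump a x - bump b x))\<^sup>2 \<partial>Mplus)"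
    by (intro integral_mono pt integrable_mult_right integral_indicator_Mplus(1)
        L2_integrable_sq_norm_diff L2_bump) auto
  finally show ?thesis by simp
qed

lemma L1_loc_potential: "L1_loc potential"
  unfolding L1_loc_def set_integrable_def
proof (intro allI impI)
  fix b :: real assume "0 \<le> b"
  have "integrable lborel (\<lambda>x. (b + 1) * indicator {0..b} x :: real)"
    using \<open>0 \<le> b\<close> by (intro integrable_mult_right) (simp add: integrable_indicator_iff)
  moreover have "(\<lambda>x. indicator {0..b} x *\<^sub>R potential x) \<in> borel_measurable lborel"
    unfolding potential_def im_potential_def by measurable
  moreover have "norm (indicator {0..b} x *\<^sub>R potential x) \<le> norm ((b + 1) * indicator {0..b} x)" for x
  proof (cases "x \<in> {0..b}")
    case True
    hence "0 \<le> real_of_int \<lfloor>x\<rfloor>" "real_of_int \<lfloor>x\<rfloor> \<le> b"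
      using of_int_floor_le[of x] by auto linarith
    moreover have "cmod (potential x) = \<bar>real_of_int \<lfloor>x\<rfloor>\<bar>"
      by (simp add: potential_def norm_mult abs_im_potential)
    ultimately show ?thesis using True by (simp add: indicator_def)
  qed simp
  ultimately show "integrable lborel (\<lambda>x. indicator {0..b} x *\<^sub>R potential x)"
    by (elim Bochner_Integration.integrable_bound) (auto intro!: AE_I2)
qed

lemma potential_tendsto_infinity: "filterlim (\<lambda>x. cmod (potential x)) at_top at_top"
proof (rule filterlim_at_top_mono[OF filterlim_tendsto_add_at_top[OF tendsto_const filterlim_ident]])
  show "\<forall>\<^sub>F x in at_top. -1 + x \<le> cmod (potential x)"
  proof (intro always_eventually allI)
    fix x :: real
    have "x < of_int \<lfloor>x\<rfloor> + 1" by (rule real_of_int_floor_add_one_gt)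
    moreover have "cmod (potential x) = \<bar>of_int \<lfloor>x\<rfloor>\<bar>"
      by (simp add: potential_def norm_mult abs_im_potential)
    ultimately show "-1 + x \<le> cmod (potential x)" by linarith
  qed
qed

theorem theorem3:
  shows "\<exists>q :: real \<Rightarrow> complex.
     L1_loc q \<and> (\<forall>x\<ge>0. Re (q x) = 0) \<and>
     filterlim (\<lambda>x. cmod (q x)) at_top at_top \<and>
     \<not> (\<exists>L. is_operator L \<and> L0 q \<subseteq> L \<and> has_compact_resolvent L)"
proof (intro exI[of _ potential] conjI notI)
  show "L1_loc potential" by (rule L1_loc_potential)
  show "\<forall>x\<ge>0. Re (potential x) = 0" by (simp add: potential_def)
  show "filterlim (\<lambda>x. cmod (potential x)) at_top at_top" by (rule potential_tendsto_infinity)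
  assume "\<exists>L. is_operator L \<and> L0 potential \<subseteq> L \<and> has_compact_resolvent L"
  then obtain L where L: "L0 potential \<subseteq> L" and "has_compact_resolvent L" by blast
  moreover have "\<not> has_compact_resolvent L"
  proof (rule not_has_compact_resolvent_if_separated[of "\<lambda>n. bump (n + 1)" "\<lambda>n. bump_image (n + 1)"
        L "1/8"])
    show "(bump (n + 1), bump_image (n + 1)) \<in> L" for n
      using bump_in_L0 L by auto
    show "\<exists>C. \<forall>n. L2_norm (\<lambda>x. bump_image (n + 1) x - lam * bump (n + 1) x) \<le> C" for lam
      by (intro exI[of _ "2 * pi\<^sup>2 + pi + (pi + 1) + cmod lam"] allI L2_norm_bump_image_diff_le) simp
    show "1/8 \<le> (\<integral>x. (cmod (bump (m + 1) x - bump (n + 1) x))\<^sup>2 \<partial>Mplus)" if "m \<noteq> n" for m n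
      using that by (intro bump_separated) simp
  qed (simp_all add: L2_bump)
  ultimately show False by blast
qed

end
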